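(* Let $\alpha,\beta,\gamma>0$ with $\alpha<1/5-\gamma$, $\delta<1/2$, and $x_0,y\in\mathcal D(\delta)$ with $\|x_0-y\|\le\frac45r_\delta$ lying on different sides of a barrier $B_i$, $i\ge1$. Let $X$ be the snapping-out Brownian motion with $X_0=x_0$, and suppose the event $$\mathcal A:=\Big\{\mathcal E_1<\alpha r_\delta,\ \mathcal E_2>\beta r_\delta,\ \|W_t-(t/r_\delta^2)(y-x_0)\|\le\gamma r_\delta\ \forall t\le r_\delta^2\Big\}$$ occurs. Then there exists $t\le r_\delta^2$ with $s_i(L^{(i)}_t)\ne s_i(0)$.
   Context: Setting. $D\subseteq\mathbb R^2$ is the closure of a bounded open set $D_0$; $D$ is connected and simply connected, with $C^\infty$ boundary $B_0:=\partial D$, a simple closed curve. $B_1,\dots,B_m\subseteq D_0$ are $C^\infty$ simple closed curves with $B_i\cap B_j=\emptyset$ for $i\neq j$ ($0\le i,j\le m$). For each $i$, the positive side of $B_i$ is the closure of the bounded component of $\mathbb R^2\setminus B_i$, the negative side the closure of the unbounded component (points of $B_i$ lie on both sides); $\vec n_i$ is the unit normal field on $B_i$ pointing into the bounded component. Fix $\lambda_i^\pm>0$. Let $W_t$ be a standard planar Wiener process and, independently, $s_1,\dots,s_m$ independent càdlàg Markov chains on $\{-1,+1\}$, $s_i$ jumping from $-1$ to $+1$ at rate $\lambda_i^+$ and from $+1$ to $-1$ at rate $\lambda_i^-$; $s_0\equiv+1$. A snapping-out Brownian motion is a family of continuous processes $X_t\in D$, $L^{(i)}_t\ge0$ such that a.s.: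 (i) $dX_t=dW_t+\sum_{i=0}^m s_i(L^{(i)}_t)\vec n_i(X_t)\mathbf 1\{X_t\in B_i\}dL^{(i)}_t$; (ii) $L^{(i)}$ nondecreasing, $L^{(i)}_0=0$, $L^{(i)}_t=\int_0^t\mathbf 1\{X_r\in B_i\}dL^{(i)}_r$; (iii) $s_i(L^{(i)}_t)=+1$ (resp. $-1$) implies $X_t$ is on the positive (resp. negative) side of $B_i$. Here $s_i(0)$ is $+1$ if $x_0$ is on the positive side of $B_i$ and $-1$ otherwise. Parameters: $\lambda_{\max}=\max\lambda_j^\pm$; $\kappa$ maximal unsigned curvature of $B_0,\dots,B_m$; $\rho:=\sup\{r\ge0:\mathsf B(x,r')\cap\bigcup_jB_j\text{ connected }\forall r'\le r,\ x\in D\}$ ($\mathsf B$ = open ball); $r_\delta:=\delta\min\{1/\kappa,1/\lambda_{\max},\rho\}$; $\mathcal D(\delta):=\{x\in D:\|x-z\|\ge r_\delta/5\ \forall z\in\bigcup_jB_j\}$. Also $\mathcal E_1:=\inf\{t\ge0:s_i(t)\ne s_i(0)\}$ and $\mathcal E_2:=\inf\{t\ge\mathcal E_1:s_i(t)\ne s_i(\mathcal E_1)\}-\mathcal E_1$. *)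

theory Defs
  imports "HOL-Analysis.Analysis"
begin

text \<open>The plane is modelled by the type complex (a 2-dimensional real inner product space).\<close>

text \<open>g 0 is a C-infinity, 1-periodic, regular parametrisation of a closed curve; g k is its k-th derivative.\<close>
definition smooth_closed_param :: "(nat \<Rightarrow> real \<Rightarrow> complex) \<Rightarrow> bool" where
  "smooth_closed_param g \<longleftrightarrow>
     (\<forall>k t. (g k has_vector_derivative g (Suc k) t) (at t)) \<and>
     (\<forall>t. g 0 (t + 1) = g 0 t) \<and>
     inj_on (g 0) {0..<1} \<and>
     (\<forall>t. g 1 t \<noteq> 0)"

definition smooth_jordan :: "complex set \<Rightarrow> (nat \<Rightarrow> real \<Rightarrow> complex) \<Rightarrow> bool" where
  "smooth_jordan B g \<longleftrightarrow> smooth_closed_param g \<and> B = g 0 ` {0..1}"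

definition curv :: "(nat \<Rightarrow> real \<Rightarrow> complex) \<Rightarrow> real \<Rightarrow> real" where
  "curv g t = \<bar>Im (cnj (g 1 t) * g 2 t)\<bar> / norm (g 1 t) ^ 3"

definition pos_side :: "complex set \<Rightarrow> complex set" where
  "pos_side B = closure (inside B)"

definition neg_side :: "complex set \<Rightarrow> complex set" where
  "neg_side B = closure (outside B)"

definition inward_normal :: "(nat \<Rightarrow> real \<Rightarrow> complex) \<Rightarrow> complex set \<Rightarrow> complex \<Rightarrow> complex" where
  "inward_normal g B p = (THE v. norm v = 1 \<and> (\<forall>t. g 0 t = p \<longrightarrow> v \<bullet> g 1 t = 0) \<and>
      (\<exists>e>0. \<forall>h. 0 < h \<and> h < e \<longrightarrow> p + h *\<^sub>R v \<in> inside B))"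

definition cadlag :: "(real \<Rightarrow> real) \<Rightarrow> bool" where
  "cadlag f \<longleftrightarrow> (\<forall>t\<ge>0. continuous (at_right t) f) \<and> (\<forall>t>0. \<exists>l. (f \<longlongrightarrow> l) (at_left t))"

definition kappa_max :: "nat \<Rightarrow> (nat \<Rightarrow> nat \<Rightarrow> real \<Rightarrow> complex) \<Rightarrow> real" where
  "kappa_max m g = Sup {curv (g j) t | j t. j \<le> m \<and> t \<in> {0..1}}"

definition lambda_max :: "nat \<Rightarrow> (nat \<Rightarrow> real) \<Rightarrow> (nat \<Rightarrow> real) \<Rightarrow> real" where
  "lambda_max m lp lm = Max (lp ` {1..m} \<union> lm ` {1..m})"

definition rho_const :: "complex set \<Rightarrow> nat \<Rightarrow> (nat \<Rightarrow> complex set) \<Rightarrow> real" where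
  "rho_const D m B = Sup {r. r \<ge> 0 \<and> (\<forall>r'\<in>{0..r}. \<forall>x\<in>D. connected (ball x r' \<inter> (\<Union>j\<le>m. B j)))}"

definition r_delta :: "real \<Rightarrow> complex set \<Rightarrow> nat \<Rightarrow> (nat \<Rightarrow> complex set) \<Rightarrow>
    (nat \<Rightarrow> nat \<Rightarrow> real \<Rightarrow> complex) \<Rightarrow> (nat \<Rightarrow> real) \<Rightarrow> (nat \<Rightarrow> real) \<Rightarrow> real" where
  "r_delta \<delta> D m B g lp lm = \<delta> * min (min (1 / kappa_max m g) (1 / lambda_max m lp lm)) (rho_const D m B)"

definition D_delta :: "real \<Rightarrow> complex set \<Rightarrow> nat \<Rightarrow> (nat \<Rightarrow> complex set) \<Rightarrow>
    (nat \<Rightarrow> nat \<Rightarrow> real \<Rightarrow> complex) \<Rightarrow> (nat \<Rightarrow> real) \<Rightarrow> (nat \<Rightarrow> real) \<Rightarrow> complex set" where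
  "D_delta \<delta> D m B g lp lm = {x \<in> D. \<forall>z \<in> (\<Union>j\<le>m. B j). dist x z \<ge> r_delta \<delta> D m B g lp lm / 5}"

text \<open>first and second holding times of a jump path (infimum of the empty set is +infinity)\<close>
definition E1 :: "(real \<Rightarrow> real) \<Rightarrow> ereal" where
  "E1 s = Inf (ereal ` {t. 0 \<le> t \<and> s t \<noteq> s 0})"

definition E2 :: "(real \<Rightarrow> real) \<Rightarrow> ereal" where
  "E2 s = (let e = real_of_ereal (E1 s) in Inf (ereal ` {t. e \<le> t \<and> s t \<noteq> s e}) - ereal e)"

definition LS :: "(real \<Rightarrow> real) \<Rightarrow> real measure" where
  "LS L = interval_measure (\<lambda>r. L (max 0 r))"

text \<open>Pathwise conditions (i)-(iii) of a snapping-out Brownian motion with driving path W,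
  chain paths s, started at x0.\<close>
definition snapping_out_path ::
  "complex set \<Rightarrow> nat \<Rightarrow> (nat \<Rightarrow> complex set) \<Rightarrow> (nat \<Rightarrow> nat \<Rightarrow> real \<Rightarrow> complex) \<Rightarrow>
   (nat \<Rightarrow> real \<Rightarrow> real) \<Rightarrow> (real \<Rightarrow> complex) \<Rightarrow> complex \<Rightarrow>
   (real \<Rightarrow> complex) \<Rightarrow> (nat \<Rightarrow> real \<Rightarrow> real) \<Rightarrow> bool" where
  "snapping_out_path D m B g s W x0 X L \<longleftrightarrow>
     continuous_on {0..} X \<and> (\<forall>t\<ge>0. X t \<in> D) \<and> X 0 = x0 \<and>
     (\<forall>j\<le>m. continuous_on {0..} (L j) \<and> mono_on {0..} (L j) \<and> L j 0 = 0 \<and>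
        (\<forall>t\<ge>0. L j t = measure (LS (L j)) {r \<in> {0..t}. X r \<in> B j})) \<and>
     (\<forall>t\<ge>0. \<forall>j\<le>m. set_integrable (LS (L j)) {0..t}
                 (\<lambda>r. (s j (L j r) * indicator (B j) (X r)) *\<^sub>R inward_normal (g j) (B j) (X r))) \<and>
     (\<forall>t\<ge>0. X t = x0 + W t + (\<Sum>j\<le>m. LINT r:{0..t}|LS (L j).
                 (s j (L j r) * indicator (B j) (X r)) *\<^sub>R inward_normal (g j) (B j) (X r))) \<and>
     (\<forall>t\<ge>0. \<forall>j\<le>m. (s j (L j t) = 1 \<longrightarrow> X t \<in> pos_side (B j)) \<and>
                     (s j (L j t) = -1 \<longrightarrow> X t \<in> neg_side (B j)))"

end

theory Submission
  imports Defs "HOL-Library.Periodic_Fun"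
begin

text \<open>
  Write r for r_delta and suppose that s_i(L_i(t)) = s_i(0) for all t \<le> r^2. The chain s_i switches
  before time \<alpha> r, so by continuity the local time L_i stays below \<alpha> r up to time r^2. The
  segment from x0 to y crosses B_i, so the ball of radius r around x0 meets B_i; since r < \<rho> its
  intersection with the barriers is connected, so it meets no other barrier. Inside that ball X is
  x0 + W plus a reflection term of size at most the local time, because the inward normal is a unit
  vector. Hence X never leaves the ball, and at time r^2 it lies within (\<gamma> + \<alpha>) r < r/5 of y,
  in a disc on the side of B_i opposite to x0; but an unchanged s_i keeps X on the side of x0.

  The geometric core is that the inward normal of a smooth Jordan curve is a well-defined unit
  vector: in coordinates adapted to the tangent the curve is locally a flat graph, every nearby point
  off the curve is joined to one of the two cones above and below it, and as the point of the curve is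
  a boundary point of both the inside and the outside, the two cones lie in different components.
\<close>

section \<open>Components of the complement of a set\<close>

lemma connected_disjoint_subset_component:
  fixes B :: "'a::real_normed_vector set"
  assumes "connected S" "S \<inter> B = {}" "x \<in> S"
  shows "x \<in> inside B \<Longrightarrow> S \<subseteq> inside B" and "x \<in> outside B \<Longrightarrow> S \<subseteq> outside B"
proof -
  have "connected_component (- B) x y" if "y \<in> S" for y
    using connected_componentI[OF assms(1) _ assms(3) that] assms(2) by blast
  then show "x \<in> inside B \<Longrightarrow> S \<subseteq> inside B" "x \<in> outside B \<Longrightarrow> S \<subseteq> outside B"
    using inside_same_component outside_same_component by blast+
qed

lemma reachable_sets_separated_by_frontier_point:
  fixes B :: "'a::real_normed_vector set"
  assumes P: "connected P" "P \<inter> B = {}" "P \<noteq> {}" and Q: "connected Q" "Q \<inter> B = {}" "Q \<noteq> {}"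
    and p: "p \<in> frontier (inside B)" "p \<in> frontier (outside B)" and "\<epsilon> > 0"
    and reach: "\<And>z. dist p z < \<epsilon> \<Longrightarrow> z \<notin> B \<Longrightarrow>
      \<exists>S. connected S \<and> S \<inter> B = {} \<and> z \<in> S \<and> S \<inter> (P \<union> Q) \<noteq> {}"
  shows "(P \<subseteq> inside B \<and> Q \<subseteq> outside B) \<or> (Q \<subseteq> inside B \<and> P \<subseteq> outside B)"
proof -
  have meets: "P \<subseteq> X \<or> Q \<subseteq> X" if X: "X = inside B \<or> X = outside B" and "p \<in> frontier X" for X
  proof -
    have "p \<in> closure X" using \<open>p \<in> frontier X\<close> by (simp add: frontier_def)
    then obtain x where x: "x \<in> X" "dist p x < \<epsilon>"
      using \<open>\<epsilon> > 0\<close> by (metis closure_approachable dist_commute)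
    have "x \<notin> B" using x(1) X inside_no_overlap outside_no_overlap by blast
    then obtain S where S: "connected S" "S \<inter> B = {}" "x \<in> S" "S \<inter> (P \<union> Q) \<noteq> {}"
      using reach[OF x(2)] by meson
    then have "S \<subseteq> X" using connected_disjoint_subset_component[OF S(1-3)] x(1) X by blast
    moreover obtain y where "y \<in> S" "y \<in> P \<union> Q" using S(4) by blast
    ultimately have "y \<in> X" by blast
    then show ?thesis
      using \<open>y \<in> P \<union> Q\<close> X connected_disjoint_subset_component[OF P(1,2)]
        connected_disjoint_subset_component[OF Q(1,2)] by blast
  qed
  have "P \<subseteq> inside B \<or> Q \<subseteq> inside B" "P \<subseteq> outside B \<or> Q \<subseteq> outside B"
    using meets[OF _ p(1)] meets[OF _ p(2)] by blast+
  moreover have "\<not> (P \<subseteq> inside B \<and> P \<subseteq> outside B)" "\<not> (Q \<subseteq> inside B \<and> Q \<subseteq> outside B)"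
    using P(3) Q(3) inside_Int_outside by blast+
  ultimately show ?thesis by blast
qed

section \<open>Flat graphs in the plane\<close>

definition upper_cone :: "real \<Rightarrow> complex set" where
  "upper_cone \<rho> = {w. norm w < \<rho> \<and> \<bar>Re w\<bar> < Im w}"

definition lower_cone :: "real \<Rightarrow> complex set" where
  "lower_cone \<rho> = {w. norm w < \<rho> \<and> Im w < - \<bar>Re w\<bar>}"

lemma convex_upper_cone: "convex (upper_cone \<rho>)"
proof -
  have "upper_cone \<rho> = ball 0 \<rho> \<inter> {w. inner (Complex 1 (-1)) w < 0} \<inter> {w. inner (Complex (-1) (-1)) w < 0}"
    by (auto simp: upper_cone_def inner_complex_def)
  then show ?thesis by (simp add: convex_Int convex_halfspace_lt)
qed

lemma convex_lower_cone: "convex (lower_cone \<rho>)"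
proof -
  have "lower_cone \<rho> = ball 0 \<rho> \<inter> {w. inner (Complex 1 1) w < 0} \<inter> {w. inner (Complex (-1) 1) w < 0}"
    by (auto simp: lower_cone_def inner_complex_def)
  then show ?thesis by (simp add: convex_Int convex_halfspace_lt)
qed

lemma imaginary_in_cones:
  assumes "0 < h" "h < \<rho>"
  shows "\<i> * of_real h \<in> upper_cone \<rho>" "- \<i> * of_real h \<in> lower_cone \<rho>"
  using assms by (simp_all add: upper_cone_def lower_cone_def norm_mult)

definition flat_graph :: "complex set \<Rightarrow> real \<Rightarrow> bool" where
  "flat_graph C \<rho> \<longleftrightarrow>
     (\<forall>w\<in>C. norm w < \<rho> \<longrightarrow> 3 * \<bar>Im w\<bar> \<le> \<bar>Re w\<bar>) \<and>
     (\<forall>\<tau>. \<bar>\<tau>\<bar> < \<rho> / 2 \<longrightarrow> (\<exists>w\<in>C. norm w < \<rho> \<and> Re w = \<tau>)) \<and>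
     inj_on Re (C \<inter> ball 0 \<rho>)"

lemma flat_graph_Int_cones:
  assumes "flat_graph C \<rho>"
  shows "upper_cone \<rho> \<inter> C = {}" "lower_cone \<rho> \<inter> C = {}"
  using assms by (fastforce simp: flat_graph_def upper_cone_def lower_cone_def)+

lemma vertical_set_to_cones:
  assumes "Re w = Re c" "\<bar>Im w\<bar> \<le> \<bar>Re w\<bar>" "3 * \<bar>Im c\<bar> \<le> \<bar>Re w\<bar>" "Im w \<noteq> Im c" "\<bar>Re w\<bar> < \<rho> / 4"
  obtains H where "connected H" "w \<in> H" "H \<inter> (upper_cone \<rho> \<union> lower_cone \<rho>) \<noteq> {}"
    "\<And>z. z \<in> H \<Longrightarrow> Re z = Re c \<and> Im z \<noteq> Im c \<and> norm z < \<rho>"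
proof -
  define \<tau> where "\<tau> = Re w"
  have "\<tau> \<noteq> 0" using assms(2-4) by (auto simp: \<tau>_def)
  define \<sigma> :: real where "\<sigma> = sgn (Im w - Im c)"
  have \<sigma>: "\<sigma> = 1 \<or> \<sigma> = -1" "\<sigma> * Im c < \<sigma> * Im w" "\<sigma> * Im c < 2 * \<bar>\<tau>\<bar>"
    using assms(3,4) \<open>\<tau> \<noteq> 0\<close> by (auto simp: \<sigma>_def \<tau>_def sgn_if)
  define H where "H = {z. Re z = \<tau> \<and> \<sigma> * Im c < \<sigma> * Im z \<and> \<bar>Im z\<bar> \<le> 2 * \<bar>\<tau>\<bar>}"
  define w' where "w' = Complex \<tau> (2 * \<sigma> * \<bar>\<tau>\<bar>)"
  show thesis
  proof (rule that[of H])
    have "H = {z. inner 1 z = \<tau>} \<inter> {z. inner (Complex 0 \<sigma>) z > \<sigma> * Im c}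
        \<inter> {z. inner \<i> z \<le> 2 * \<bar>\<tau>\<bar>} \<inter> {z. inner (- \<i>) z \<le> 2 * \<bar>\<tau>\<bar>}"
      by (auto simp: H_def inner_complex_def abs_le_iff)
    then show "connected H"
      by (metis convex_connected convex_Int convex_hyperplane convex_halfspace_gt convex_halfspace_le)
    show "w \<in> H" using \<sigma>(2) assms(2) by (simp add: H_def \<tau>_def)
    show "Re z = Re c \<and> Im z \<noteq> Im c \<and> norm z < \<rho>" if "z \<in> H" for z
    proof -
      have "norm z \<le> \<bar>Re z\<bar> + \<bar>Im z\<bar>" by (rule cmod_le)
      then show ?thesis using that assms(1,5) by (auto simp: H_def \<tau>_def)
    qed
    have "w' \<in> H" using \<sigma> by (auto simp: H_def w'_def)
    moreover have "w' \<in> upper_cone \<rho> \<union> lower_cone \<rho>"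
    proof -
      have "norm w' \<le> \<bar>\<tau>\<bar> + \<bar>2 * \<sigma> * \<bar>\<tau>\<bar>\<bar>" using cmod_le[of w'] by (simp add: w'_def)
      then have "norm w' < \<rho>" using assms(5) \<sigma>(1) by (auto simp: \<tau>_def)
      then show ?thesis using \<open>\<tau> \<noteq> 0\<close> \<sigma>(1) by (auto simp: upper_cone_def lower_cone_def w'_def)
    qed
    ultimately show "H \<inter> (upper_cone \<rho> \<union> lower_cone \<rho>) \<noteq> {}" by blast
  qed
qed

lemma flat_graph_complement_reaches_cones:
  assumes "flat_graph C \<rho>" and w: "norm w < \<rho> / 4" "w \<notin> C"
  obtains S where "connected S" "S \<inter> C = {}" "w \<in> S" "S \<inter> (upper_cone \<rho> \<union> lower_cone \<rho>) \<noteq> {}"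
proof (cases "w \<in> upper_cone \<rho> \<union> lower_cone \<rho>")
  case True
  with w(2) show thesis by (intro that[of "{w}"]) auto
next
  case False
  have "\<bar>Im w\<bar> \<le> \<bar>Re w\<bar>" "\<bar>Re w\<bar> < \<rho> / 4"
    using False w(1) abs_Re_le_cmod[of w] by (auto simp: upper_cone_def lower_cone_def)
  then obtain c where c: "c \<in> C" "norm c < \<rho>" "Re c = Re w" "3 * \<bar>Im c\<bar> \<le> \<bar>Re w\<bar>"
    using \<open>flat_graph C \<rho>\<close> unfolding flat_graph_def by force
  have "Im w \<noteq> Im c"
  proof
    assume "Im w = Im c"
    then have "w = c" using c(3) by (simp add: complex_eq_iff)
    then show False using c(1) w(2) by simp
  qed
  then obtain H where H: "connected H" "w \<in> H" "H \<inter> (upper_cone \<rho> \<union> lower_cone \<rho>) \<noteq> {}"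
    and vertical: "\<And>z. z \<in> H \<Longrightarrow> Re z = Re c \<and> Im z \<noteq> Im c \<and> norm z < \<rho>"
    using vertical_set_to_cones[OF c(3)[symmetric] \<open>\<bar>Im w\<bar> \<le> \<bar>Re w\<bar>\<close> c(4) _ \<open>\<bar>Re w\<bar> < \<rho> / 4\<close>]
    by blast
  have "H \<inter> C = {}"
  proof (intro equals0I)
    fix z assume z: "z \<in> H \<inter> C"
    then have "z = c" using vertical[of z] c(1,2) \<open>flat_graph C \<rho>\<close>
      by (auto simp: flat_graph_def inj_on_def)
    then show False using vertical[of z] z by simp
  qed
  with H show thesis by (intro that) auto
qed

lemma unit_orthogonal_complex:
  fixes a v :: complex
  assumes "a \<noteq> 0" "norm v = 1" "inner v a = 0"
  shows "v = \<i> * sgn a \<or> v = - \<i> * sgn a"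
proof -
  define w where "w = cnj (sgn a) * v"
  have "sgn a * cnj (sgn a) = 1"
    using complex_norm_square[of "sgn a"] assms(1) by (simp add: norm_sgn)
  then have v: "v = sgn a * w" by (simp add: w_def mult.assoc[symmetric])
  have "Re w = inner v a / norm a"
    using assms(1) by (simp add: w_def sgn_div_norm inner_complex_def divide_inverse mult.commute)
  then have "Re w = 0" using assms(3) by simp
  moreover have "norm w = 1" using assms by (simp add: w_def norm_mult norm_sgn)
  ultimately have "w = \<i> \<or> w = - \<i>" by (auto simp: complex_eq_iff cmod_def)
  then show ?thesis using v by (auto simp: mult.commute)
qed

lemma inner_i_sgn_self: "inner (\<i> * sgn a) a = 0"
  by (simp add: inner_complex_def sgn_div_norm)

section \<open>Smooth Jordan curves and their inward normal\<close>

lemma vector_derivative_linearization_bound: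
  fixes f :: "real \<Rightarrow> 'a::real_normed_vector"
  assumes deriv: "\<And>x. x \<in> {c..d} \<Longrightarrow> (f has_vector_derivative f' x) (at x)"
    and close: "\<And>x. x \<in> {c..d} \<Longrightarrow> norm (f' x - f' x0) \<le> K"
    and t: "x0 \<in> {c..d}" "t1 \<in> {c..d}" "t2 \<in> {c..d}"
  shows "norm (f t2 - f t1 - (t2 - t1) *\<^sub>R f' x0) \<le> \<bar>t2 - t1\<bar> * K"
proof -
  have "0 \<le> K" using close[OF t(1)] by simp
  have "norm (f t2 - f t1 - (\<lambda>h. h *\<^sub>R f' x0) (t2 - t1)) \<le> norm (t2 - t1) * K"
  proof (rule differentiable_bound_linearization[where S="{c..d}" and f'="\<lambda>x h. h *\<^sub>R f' x"])
    show "t1 + u *\<^sub>R (t2 - t1) \<in> {c..d}" if "u \<in> {0..1}" for u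
      using t that convexD_alt[of "{c..d}" t1 t2 u] by (simp add: algebra_simps)
    show "(f has_derivative (\<lambda>h. h *\<^sub>R f' x)) (at x within {c..d})" if "x \<in> {c..d}" for x
      using deriv[OF that] by (simp add: has_vector_derivative_def has_derivative_at_withinI)
    show "onorm ((\<lambda>h. h *\<^sub>R f' x) - (\<lambda>h. h *\<^sub>R f' x0)) \<le> K" if "x \<in> {c..d}" for x
      using close[OF that] \<open>0 \<le> K\<close>
      by (intro onorm_bound) (auto simp: scaleR_diff_right[symmetric] mult.commute[of K] mult_left_mono)
  qed (use t in auto)
  then show ?thesis by simp
qed

locale smooth_jordan_curve =
  fixes B :: "complex set" and g :: "nat \<Rightarrow> real \<Rightarrow> complex"
  assumes smooth_jordan: "smooth_jordan B g"
begin

lemma smooth_closed_param: "smooth_closed_param g"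
  and curve_eq: "B = g 0 ` {0..1}"
  using smooth_jordan unfolding smooth_jordan_def by auto

lemma has_vector_derivative_g: "(g k has_vector_derivative g (Suc k) t) (at t)"
  using smooth_closed_param unfolding smooth_closed_param_def by blast

lemma curve_has_vector_derivative: "(g 0 has_vector_derivative g 1 t) (at t)"
  using has_vector_derivative_g[of 0] by simp

lemma continuous_on_g: "continuous_on S (g k)"
  by (meson continuous_at_imp_continuous_on has_vector_derivative_g has_vector_derivative_continuous)

lemma tangent_nonzero: "g 1 t \<noteq> 0"
  using smooth_closed_param unfolding smooth_closed_param_def by blast

sublocale curve: periodic_fun_simple' "g 0"
  by unfold_locales (use smooth_closed_param in \<open>simp add: smooth_closed_param_def\<close>)

sublocale tangent: periodic_fun_simple' "g 1"
proof
  fix t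
  have "((\<lambda>u. u + 1) has_vector_derivative 1) (at t)"
    by (auto intro!: derivative_eq_intros)
  from vector_diff_chain_at[OF this has_vector_derivative_g[of 0 "t + 1"]]
  have "((\<lambda>u. g 0 (u + 1)) has_vector_derivative g 1 (t + 1)) (at t)"
    by (simp add: o_def)
  then show "g 1 (t + 1) = g 1 t"
    using has_vector_derivative_g[of 0 t] vector_derivative_unique_at by (simp add: curve.plus_1)
qed

lemma curve_eq_imp_int_shift:
  assumes "g 0 s = g 0 t"
  obtains k :: int where "s = t + of_int k"
proof -
  have "g 0 (s - of_int \<lfloor>s\<rfloor>) = g 0 (t - of_int \<lfloor>t\<rfloor>)"
    using assms curve.minus_of_int by simp
  moreover have "s - of_int \<lfloor>s\<rfloor> \<in> {0..<1}" "t - of_int \<lfloor>t\<rfloor> \<in> {0..<1}"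
    by (simp_all add: floor_le_iff) linarith+
  ultimately have "s - of_int \<lfloor>s\<rfloor> = t - of_int \<lfloor>t\<rfloor>"
    using smooth_closed_param unfolding smooth_closed_param_def inj_on_def by blast
  then show thesis
    using that[of "\<lfloor>s\<rfloor> - \<lfloor>t\<rfloor>"] by simp
qed

lemma tangent_unique: "g 0 s = g 0 t \<Longrightarrow> g 1 s = g 1 t"
  by (metis curve_eq_imp_int_shift tangent.plus_of_int)

lemma image_unit_interval: "g 0 ` {c..c+1} = range (g 0)"
proof -
  have "g 0 s \<in> g 0 ` {c..c+1}" for s
  proof
    show "g 0 s = g 0 (s - of_int \<lfloor>s - c\<rfloor>)"
      using curve.minus_of_int by simp
    show "s - of_int \<lfloor>s - c\<rfloor> \<in> {c..c+1}"
      by (simp add: floor_le_iff) linarith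
  qed
  then show ?thesis by blast
qed

lemma curve_range: "B = range (g 0)"
  using image_unit_interval[of 0] curve_eq by simp

lemma compact_curve: "compact B"
  using curve_eq by (simp add: compact_continuous_image continuous_on_g)

lemma closed_curve: "closed B"
  by (simp add: compact_curve compact_imp_closed)

lemma simple_closed_path: "simple_path (g 0)" "pathfinish (g 0) = pathstart (g 0)"
proof -
  show "pathfinish (g 0) = pathstart (g 0)"
    using curve.plus_1[of 0] by (simp add: pathfinish_def pathstart_def)
  have "x = y \<or> x = 0 \<and> y = 1 \<or> x = 1 \<and> y = 0"
    if xy: "x \<in> {0..1}" "y \<in> {0..1}" "g 0 x = g 0 y" for x y
  proof -
    obtain k :: int where k: "x = y + of_int k"
      using curve_eq_imp_int_shift[OF xy(3)] .
    then have "k \<in> {-1, 0, 1}" using xy(1,2) by auto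
    then show ?thesis using k xy(1,2) by auto
  qed
  then show "simple_path (g 0)"
    by (simp add: simple_path_def path_def continuous_on_g loop_free_def)
qed

lemma Jordan_curve:
  "open (inside B)" "open (outside B)" "frontier (inside B) = B" "frontier (outside B) = B"
  using Jordan_inside_outside[OF simple_closed_path] curve_eq by (auto simp: path_image_def)

text \<open>Coordinates centred at g 0 t0 in which the tangent there points along the positive real axis.\<close>
definition chart :: "real \<Rightarrow> complex \<Rightarrow> complex" where
  "chart t0 z = cnj (sgn (g 1 t0)) * (z - g 0 t0)"

definition unchart :: "real \<Rightarrow> complex \<Rightarrow> complex" where
  "unchart t0 w = g 0 t0 + sgn (g 1 t0) * w"

lemma cnj_sgn_tangent_mult: "cnj (sgn (g 1 t0)) * sgn (g 1 t0) = 1"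
  using complex_norm_square[of "sgn (g 1 t0)"] tangent_nonzero by (simp add: norm_sgn mult.commute)

lemma unchart_chart: "unchart t0 (chart t0 z) = z"
proof -
  have "sgn (g 1 t0) * chart t0 z = z - g 0 t0"
    unfolding chart_def mult.assoc[symmetric] mult.commute[of "sgn _" "cnj _"] cnj_sgn_tangent_mult
    by simp
  then show ?thesis by (simp add: unchart_def)
qed

lemma chart_unchart: "chart t0 (unchart t0 w) = w"
  unfolding chart_def unchart_def add_diff_cancel_left' mult.assoc[symmetric] cnj_sgn_tangent_mult by simp

lemma norm_chart: "norm (chart t0 z) = dist (g 0 t0) z"
  using tangent_nonzero by (simp add: chart_def norm_mult norm_sgn dist_norm norm_minus_commute)

lemma chart_tangent: "cnj (sgn (g 1 t0)) * g 1 t0 = of_real (norm (g 1 t0))"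
proof -
  have "cnj (sgn (g 1 t0)) * g 1 t0 = (cnj (g 1 t0) * g 1 t0) /\<^sub>R norm (g 1 t0)"
    by (simp add: sgn_div_norm)
  also have "cnj (g 1 t0) * g 1 t0 = of_real (norm (g 1 t0) * norm (g 1 t0))"
    using complex_norm_square[of "g 1 t0"] by (simp add: power2_eq_square mult.commute)
  finally show ?thesis
    using tangent_nonzero by (simp add: scaleR_conv_of_real)
qed

lemma chart_curve_linearization:
  obtains \<eta> where "0 < \<eta>" "\<eta> < 1/2"
    "\<And>t1 t2. t1 \<in> {t0-\<eta>..t0+\<eta>} \<Longrightarrow> t2 \<in> {t0-\<eta>..t0+\<eta>} \<Longrightarrow>
      norm (chart t0 (g 0 t2) - chart t0 (g 0 t1) - of_real ((t2 - t1) * norm (g 1 t0)))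
        \<le> \<bar>t2 - t1\<bar> * (norm (g 1 t0) / 4)"
proof -
  define a where "a = g 1 t0"
  have "norm a / 4 > 0" using tangent_nonzero by (simp add: a_def)
  moreover have "continuous (at t0) (g 1)"
    using continuous_on_g[of UNIV 1] by (simp add: continuous_on_eq_continuous_at)
  ultimately obtain d where d: "d > 0" "\<And>x. dist x t0 < d \<Longrightarrow> dist (g 1 x) a < norm a / 4"
    unfolding continuous_at_eps_delta a_def by blast
  define \<eta> where "\<eta> = min (d/2) (1/4)"
  have \<eta>: "0 < \<eta>" "\<eta> < 1/2" using d(1) by (auto simp: \<eta>_def)
  have "norm (chart t0 (g 0 t2) - chart t0 (g 0 t1) - of_real ((t2 - t1) * norm a))
      \<le> \<bar>t2 - t1\<bar> * (norm a / 4)"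
    if t: "t1 \<in> {t0-\<eta>..t0+\<eta>}" "t2 \<in> {t0-\<eta>..t0+\<eta>}" for t1 t2
  proof -
    have "cnj (sgn a) * ((t2 - t1) *\<^sub>R a) = of_real ((t2 - t1) * norm a)"
      using chart_tangent[of t0] by (simp add: a_def scaleR_conv_of_real)
    then have "chart t0 (g 0 t2) - chart t0 (g 0 t1) - of_real ((t2 - t1) * norm a)
        = cnj (sgn a) * (g 0 t2 - g 0 t1 - (t2 - t1) *\<^sub>R a)"
      by (simp add: chart_def a_def right_diff_distrib)
    also have "norm \<dots> = norm (g 0 t2 - g 0 t1 - (t2 - t1) *\<^sub>R a)"
      using tangent_nonzero by (simp add: norm_mult norm_sgn a_def)
    also have "\<dots> \<le> \<bar>t2 - t1\<bar> * (norm a / 4)"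
      unfolding a_def
    proof (rule vector_derivative_linearization_bound[OF curve_has_vector_derivative])
      show "norm (g 1 x - g 1 t0) \<le> norm (g 1 t0) / 4" if "x \<in> {t0-\<eta>..t0+\<eta>}" for x
      proof -
        have "dist x t0 < d" using that d(1) by (auto simp: \<eta>_def dist_real_def)
        then show ?thesis using d(2) by (simp add: a_def dist_norm less_imp_le)
      qed
    qed (use t \<eta> in auto)
    finally show ?thesis .
  qed
  with \<eta> that show thesis by (simp add: a_def)
qed

lemma chart_curve_graph:
  obtains \<eta> where "0 < \<eta>" "\<eta> < 1/2"
    "\<And>t1 t2. t1 \<in> {t0-\<eta>..t0+\<eta>} \<Longrightarrow> t2 \<in> {t0-\<eta>..t0+\<eta>} \<Longrightarrow> t1 < t2 \<Longrightarrow>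
      Re (chart t0 (g 0 t1)) < Re (chart t0 (g 0 t2))"
    "\<And>t. t \<in> {t0-\<eta>..t0+\<eta>} \<Longrightarrow> 3 * \<bar>Im (chart t0 (g 0 t))\<bar> \<le> \<bar>Re (chart t0 (g 0 t))\<bar>"
proof -
  obtain \<eta> where \<eta>: "0 < \<eta>" "\<eta> < 1/2" and lin:
    "\<And>t1 t2. t1 \<in> {t0-\<eta>..t0+\<eta>} \<Longrightarrow> t2 \<in> {t0-\<eta>..t0+\<eta>} \<Longrightarrow>
      norm (chart t0 (g 0 t2) - chart t0 (g 0 t1) - of_real ((t2 - t1) * norm (g 1 t0)))
        \<le> \<bar>t2 - t1\<bar> * (norm (g 1 t0) / 4)"
    using chart_curve_linearization by blast
  define F where "F t = chart t0 (g 0 t)" for t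
  define c where "c = norm (g 1 t0)"
  have "c > 0" using tangent_nonzero by (simp add: c_def)
  have t0: "t0 \<in> {t0-\<eta>..t0+\<eta>}" and "F t0 = 0" using \<eta> by (auto simp: F_def chart_def)
  have re: "\<bar>Re (F t2) - Re (F t1) - (t2 - t1) * c\<bar> \<le> \<bar>t2 - t1\<bar> * (c / 4)"
    and im: "\<bar>Im (F t2) - Im (F t1)\<bar> \<le> \<bar>t2 - t1\<bar> * (c / 4)"
    if "t1 \<in> {t0-\<eta>..t0+\<eta>}" "t2 \<in> {t0-\<eta>..t0+\<eta>}" for t1 t2
    using lin[OF that] abs_Re_le_cmod[of "F t2 - F t1 - of_real ((t2 - t1) * c)"]
      abs_Im_le_cmod[of "F t2 - F t1 - of_real ((t2 - t1) * c)"]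
    by (simp_all add: F_def c_def)
  show thesis
  proof (rule that[OF \<eta>], unfold F_def[symmetric])
    show "Re (F t1) < Re (F t2)"
      if "t1 \<in> {t0-\<eta>..t0+\<eta>}" "t2 \<in> {t0-\<eta>..t0+\<eta>}" "t1 < t2" for t1 t2
    proof -
      have "\<bar>t2 - t1\<bar> * (c / 4) < (t2 - t1) * c" using \<open>c > 0\<close> \<open>t1 < t2\<close> by simp
      then show ?thesis using abs_le_D2[OF re[OF that(1,2)]] by linarith
    qed
    show "3 * \<bar>Im (F t)\<bar> \<le> \<bar>Re (F t)\<bar>" if t: "t \<in> {t0-\<eta>..t0+\<eta>}" for t
    proof -
      have "\<bar>Re (F t) - (t - t0) * c\<bar> \<le> \<bar>t - t0\<bar> * (c / 4)" "\<bar>Im (F t)\<bar> \<le> \<bar>t - t0\<bar> * (c / 4)"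
        using re[OF t0 t] im[OF t0 t] \<open>F t0 = 0\<close> by simp_all
      moreover have "\<bar>(t - t0) * c\<bar> = 4 * (\<bar>t - t0\<bar> * (c / 4))" using \<open>c > 0\<close> by (simp add: abs_mult)
      ultimately show ?thesis by linarith
    qed
  qed
qed

lemma near_curve_point_on_arc:
  assumes "0 < \<eta>" "\<eta> < 1/2"
  obtains \<rho> where "\<rho> > 0" "\<And>z. z \<in> B \<Longrightarrow> dist (g 0 t0) z < \<rho> \<Longrightarrow> z \<in> g 0 ` {t0-\<eta>..t0+\<eta>}"
proof -
  define A where "A = g 0 ` {t0+\<eta>..t0+1-\<eta>}"
  have "closed A"
    unfolding A_def by (intro compact_imp_closed compact_continuous_image continuous_on_g compact_Icc)
  have "g 0 t0 \<notin> A"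
  proof
    assume "g 0 t0 \<in> A"
    then obtain s where s: "s \<in> {t0+\<eta>..t0+1-\<eta>}" "g 0 s = g 0 t0" by (auto simp: A_def)
    obtain k :: int where "s = t0 + of_int k" using curve_eq_imp_int_shift[OF s(2)] .
    with s(1) assms have "of_int k > (0::real)" "of_int k < (1::real)" by auto
    then have "0 < k" "k < 1" by simp_all
    then show False by simp
  qed
  obtain \<rho> where \<rho>: "\<rho> > 0" "\<And>z. z \<in> A \<Longrightarrow> \<rho> \<le> dist (g 0 t0) z"
    using separate_point_closed[OF \<open>closed A\<close> \<open>g 0 t0 \<notin> A\<close>] by blast
  have "z \<in> g 0 ` {t0-\<eta>..t0+\<eta>}" if z: "z \<in> B" "dist (g 0 t0) z < \<rho>" for z
  proof -
    have "z \<in> g 0 ` {t0-\<eta>..t0-\<eta>+1}"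
      using z(1) unfolding image_unit_interval curve_range .
    then obtain s where s: "s \<in> {t0-\<eta>..t0-\<eta>+1}" "z = g 0 s" by blast
    have "s \<notin> {t0+\<eta>..t0+1-\<eta>}"
    proof
      assume "s \<in> {t0+\<eta>..t0+1-\<eta>}"
      then have "z \<in> A" using s(2) by (simp add: A_def)
      then have "\<rho> \<le> dist (g 0 t0) z" by (rule \<rho>(2))
      then show False using z(2) by simp
    qed
    then have "s \<in> {t0-\<eta>..t0+\<eta>}" using s(1) by auto
    then show ?thesis using s(2) by blast
  qed
  with \<rho>(1) show thesis by (rule that)
qed

lemma flat_chart:
  obtains \<rho> where "0 < \<rho>" "flat_graph (chart t0 ` B) \<rho>"
proof -
  obtain \<eta> where \<eta>: "0 < \<eta>" "\<eta> < 1/2"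
    and mono: "\<And>t1 t2. t1 \<in> {t0-\<eta>..t0+\<eta>} \<Longrightarrow> t2 \<in> {t0-\<eta>..t0+\<eta>} \<Longrightarrow> t1 < t2 \<Longrightarrow>
      Re (chart t0 (g 0 t1)) < Re (chart t0 (g 0 t2))"
    and cone: "\<And>t. t \<in> {t0-\<eta>..t0+\<eta>} \<Longrightarrow> 3 * \<bar>Im (chart t0 (g 0 t))\<bar> \<le> \<bar>Re (chart t0 (g 0 t))\<bar>"
    using chart_curve_graph[of t0] by blast
  obtain \<rho>1 where "\<rho>1 > 0" and near: "\<And>z. z \<in> B \<Longrightarrow> dist (g 0 t0) z < \<rho>1 \<Longrightarrow> z \<in> g 0 ` {t0-\<eta>..t0+\<eta>}"
    using near_curve_point_on_arc[of \<eta> t0] \<eta> by blast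
  define J where "J = {t0-\<eta>..t0+\<eta>}"
  define F where "F t = chart t0 (g 0 t)" for t
  note mono = mono[folded J_def F_def] and cone = cone[folded J_def F_def] and near = near[folded J_def]
  have "t0 - \<eta> \<in> J" "t0 \<in> J" "t0 + \<eta> \<in> J" "F t0 = 0" using \<eta> by (auto simp: J_def F_def chart_def)
  then have ends: "Re (F (t0 - \<eta>)) < 0" "0 < Re (F (t0 + \<eta>))" using mono \<eta> by fastforce+
  define \<rho> where "\<rho> = min (min (- Re (F (t0 - \<eta>))) (Re (F (t0 + \<eta>)))) \<rho>1"
  have "0 < \<rho>" using \<open>\<rho>1 > 0\<close> ends by (simp add: \<rho>_def)
  have on_arc: "w \<in> F ` J" if "w \<in> chart t0 ` B" "norm w < \<rho>" for w
    using that near norm_chart by (force simp: F_def \<rho>_def)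
  have "\<exists>w \<in> chart t0 ` B. norm w < \<rho> \<and> Re w = \<tau>" if \<tau>: "\<bar>\<tau>\<bar> < \<rho> / 2" for \<tau>
  proof -
    have "continuous_on {t0-\<eta>..t0+\<eta>} (\<lambda>t. Re (F t))"
      unfolding F_def chart_def by (intro continuous_intros continuous_on_g)
    then obtain t where t: "t \<in> J" "Re (F t) = \<tau>"
      using IVT'[of "\<lambda>t. Re (F t)" "t0 - \<eta>" \<tau> "t0 + \<eta>"] \<tau> \<eta> by (force simp: \<rho>_def J_def)
    moreover have "norm (F t) < \<rho>" using cmod_le[of "F t"] cone[OF t(1)] t(2) \<tau> by simp
    moreover have "F t \<in> chart t0 ` B" by (simp add: F_def curve_range)
    ultimately show ?thesis by blast
  qed
  moreover have "inj_on Re (chart t0 ` B \<inter> ball 0 \<rho>)"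
  proof (rule inj_onI)
    fix w w' assume "w \<in> chart t0 ` B \<inter> ball 0 \<rho>" "w' \<in> chart t0 ` B \<inter> ball 0 \<rho>" "Re w = Re w'"
    moreover from this obtain t t' where "t \<in> J" "w = F t" "t' \<in> J" "w' = F t'"
      using on_arc by (metis IntD1 IntD2 imageE mem_ball_0)
    ultimately show "w = w'" using mono[of t t'] mono[of t' t] by (cases t t' rule: linorder_cases) auto
  qed
  moreover have "3 * \<bar>Im w\<bar> \<le> \<bar>Re w\<bar>" if "w \<in> chart t0 ` B" "norm w < \<rho>" for w
    using on_arc[OF that] cone by blast
  ultimately show thesis using that \<open>0 < \<rho>\<close> by (auto simp: flat_graph_def)
qed

lemma continuous_on_unchart: "continuous_on S (unchart t0)"
  unfolding unchart_def by (intro continuous_intros)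

lemma unchart_image_Int_curve:
  assumes "A \<inter> chart t0 ` B = {}"
  shows "unchart t0 ` A \<inter> B = {}"
proof (intro equals0I)
  fix z assume "z \<in> unchart t0 ` A \<inter> B"
  then obtain w where "w \<in> A" "unchart t0 w \<in> B" by blast
  moreover have "w = chart t0 (unchart t0 w)" by (simp only: chart_unchart)
  ultimately have "w \<in> A \<inter> chart t0 ` B" by blast
  with assms show False by blast
qed

lemma unchart_imaginary:
  "unchart t0 (\<i> * of_real h) = g 0 t0 + h *\<^sub>R (\<i> * sgn (g 1 t0))"
  "unchart t0 (- \<i> * of_real h) = g 0 t0 - h *\<^sub>R (\<i> * sgn (g 1 t0))"
  by (simp_all add: unchart_def scaleR_conv_of_real)

lemma chart_complement_reaches_cones:
  assumes "flat_graph (chart t0 ` B) \<rho>" "dist (g 0 t0) z < \<rho> / 4" "z \<notin> B"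
  shows "\<exists>S. connected S \<and> S \<inter> B = {} \<and> z \<in> S \<and>
    S \<inter> (unchart t0 ` upper_cone \<rho> \<union> unchart t0 ` lower_cone \<rho>) \<noteq> {}"
proof -
  have off: "chart t0 z \<notin> chart t0 ` B"
  proof
    assume "chart t0 z \<in> chart t0 ` B"
    then obtain z' where "z' \<in> B" "chart t0 z = chart t0 z'" by blast
    then have "unchart t0 (chart t0 z) \<in> B" by (simp only: unchart_chart)
    with assms(3) show False by (simp only: unchart_chart)
  qed
  have near: "norm (chart t0 z) < \<rho> / 4" using assms(2) by (simp add: norm_chart)
  obtain S where S: "connected S" "S \<inter> chart t0 ` B = {}" "chart t0 z \<in> S"
      "S \<inter> (upper_cone \<rho> \<union> lower_cone \<rho>) \<noteq> {}"
    using flat_graph_complement_reaches_cones[OF assms(1) near off] by blast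
  show ?thesis
  proof (intro exI conjI)
    show "connected (unchart t0 ` S)" by (rule connected_continuous_image[OF continuous_on_unchart S(1)])
    show "unchart t0 ` S \<inter> B = {}" using unchart_image_Int_curve[OF S(2)] .
    show "z \<in> unchart t0 ` S" using imageI[OF S(3), of "unchart t0"] by (simp only: unchart_chart)
    obtain w where "w \<in> S" "w \<in> upper_cone \<rho> \<union> lower_cone \<rho>" using S(4) by blast
    then show "unchart t0 ` S \<inter> (unchart t0 ` upper_cone \<rho> \<union> unchart t0 ` lower_cone \<rho>) \<noteq> {}"
      by blast
  qed
qed

lemma unchart_cones_opposite_sides:
  assumes "0 < \<rho>" "flat_graph (chart t0 ` B) \<rho>"
  defines "P \<equiv> unchart t0 ` upper_cone \<rho>" and "Q \<equiv> unchart t0 ` lower_cone \<rho>"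
  shows "(P \<subseteq> inside B \<and> Q \<subseteq> outside B) \<or> (Q \<subseteq> inside B \<and> P \<subseteq> outside B)"
proof (rule reachable_sets_separated_by_frontier_point)
  show "connected P" "connected Q" unfolding P_def Q_def
    by (simp_all add: connected_continuous_image[OF continuous_on_unchart] convex_connected
        convex_upper_cone convex_lower_cone)
  show "P \<inter> B = {}" "Q \<inter> B = {}"
    unfolding P_def Q_def using unchart_image_Int_curve flat_graph_Int_cones[OF assms(2)] by simp_all
  show "P \<noteq> {}" "Q \<noteq> {}"
    using imaginary_in_cones[of "\<rho> / 2" \<rho>] \<open>0 < \<rho>\<close> unfolding P_def Q_def by auto
  have "g 0 t0 \<in> B" by (simp add: curve_range)
  then show "g 0 t0 \<in> frontier (inside B)" "g 0 t0 \<in> frontier (outside B)"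
    using Jordan_curve by simp_all
  show "\<rho> / 4 > 0" using \<open>0 < \<rho>\<close> by simp
qed (use chart_complement_reaches_cones[OF assms(2)] in \<open>simp add: P_def Q_def\<close>)

lemma normal_line_crosses_curve:
  obtains \<rho> v where "\<rho> > 0" "v = \<i> * sgn (g 1 t0) \<or> v = - (\<i> * sgn (g 1 t0))"
    "\<And>h. 0 < h \<Longrightarrow> h < \<rho> \<Longrightarrow> g 0 t0 + h *\<^sub>R v \<in> inside B \<and> g 0 t0 - h *\<^sub>R v \<in> outside B"
proof -
  define n where "n = \<i> * sgn (g 1 t0)"
  obtain \<rho> where "0 < \<rho>" "flat_graph (chart t0 ` B) \<rho>" using flat_chart[of t0] by blast
  have cones: "g 0 t0 + h *\<^sub>R n \<in> unchart t0 ` upper_cone \<rho>"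
    "g 0 t0 - h *\<^sub>R n \<in> unchart t0 ` lower_cone \<rho>" if "0 < h" "h < \<rho>" for h
    using imaginary_in_cones[OF that] unchart_imaginary[of t0 h] unfolding n_def by (metis imageI)+
  have "g 0 t0 + h *\<^sub>R (- n) = g 0 t0 - h *\<^sub>R n" "g 0 t0 - h *\<^sub>R (- n) = g 0 t0 + h *\<^sub>R n" for h
    by simp_all
  note flipped = that[OF \<open>0 < \<rho>\<close>, of "- n", unfolded this]
  from unchart_cones_opposite_sides[OF \<open>0 < \<rho>\<close> \<open>flat_graph (chart t0 ` B) \<rho>\<close>] show thesis
  proof
    assume "unchart t0 ` upper_cone \<rho> \<subseteq> inside B \<and> unchart t0 ` lower_cone \<rho> \<subseteq> outside B"
    then show thesis using that[OF \<open>0 < \<rho>\<close>, of n] cones unfolding n_def by blast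
  next
    assume "unchart t0 ` lower_cone \<rho> \<subseteq> inside B \<and> unchart t0 ` upper_cone \<rho> \<subseteq> outside B"
    then show thesis using flipped cones unfolding n_def by blast
  qed
qed

lemma norm_inward_normal:
  assumes "p \<in> B"
  shows "norm (inward_normal g B p) = 1"
proof -
  obtain t0 where p: "p = g 0 t0" using assms curve_range by blast
  obtain \<rho> v where "\<rho> > 0" and v: "v = \<i> * sgn (g 1 t0) \<or> v = - (\<i> * sgn (g 1 t0))"
    and cross: "\<And>h. 0 < h \<Longrightarrow> h < \<rho> \<Longrightarrow> p + h *\<^sub>R v \<in> inside B \<and> p - h *\<^sub>R v \<in> outside B"
    unfolding p using normal_line_crosses_curve[of t0] by blast
  have "norm v = 1" using v tangent_nonzero by (auto simp: norm_mult norm_sgn)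
  \<comment> \<open>inward_normal is a definite description, so v must be its only solution.\<close>
  have normal: "norm u = 1 \<and> (\<forall>t. g 0 t = p \<longrightarrow> inner u (g 1 t) = 0) \<and>
      (\<exists>e>0. \<forall>h. 0 < h \<and> h < e \<longrightarrow> p + h *\<^sub>R u \<in> inside B) \<longleftrightarrow> u = v" for u
  proof
    assume u: "norm u = 1 \<and> (\<forall>t. g 0 t = p \<longrightarrow> inner u (g 1 t) = 0) \<and>
      (\<exists>e>0. \<forall>h. 0 < h \<and> h < e \<longrightarrow> p + h *\<^sub>R u \<in> inside B)"
    then have "u = \<i> * sgn (g 1 t0) \<or> u = - (\<i> * sgn (g 1 t0))"
      using unit_orthogonal_complex[OF tangent_nonzero] p by simp
    then have "u = v \<or> u = - v" using v by auto
    obtain e where "e > 0" and e: "\<And>h. 0 < h \<Longrightarrow> h < e \<Longrightarrow> p + h *\<^sub>R u \<in> inside B" using u by blast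
    show "u = v"
    proof (rule ccontr)
      assume "u \<noteq> v"
      define h where "h = min e \<rho> / 2"
      have "0 < h" "h < e" "h < \<rho>" using \<open>e > 0\<close> \<open>\<rho> > 0\<close> by (auto simp: h_def)
      have "u = - v" using \<open>u = v \<or> u = - v\<close> \<open>u \<noteq> v\<close> by blast
      then have "p - h *\<^sub>R v \<in> inside B" using e[OF \<open>0 < h\<close> \<open>h < e\<close>] by simp
      moreover have "p - h *\<^sub>R v \<in> outside B" using cross[OF \<open>0 < h\<close> \<open>h < \<rho>\<close>] by blast
      ultimately show False using inside_Int_outside by blast
    qed
  next
    assume "u = v"
    moreover have "inner v (g 1 t) = 0" if "g 0 t = p" for t
      using tangent_unique[of t t0] that v p inner_i_sgn_self[of "g 1 t0"] by auto
    ultimately show "norm u = 1 \<and> (\<forall>t. g 0 t = p \<longrightarrow> inner u (g 1 t) = 0) \<and>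
      (\<exists>e>0. \<forall>h. 0 < h \<and> h < e \<longrightarrow> p + h *\<^sub>R u \<in> inside B)"
      using \<open>norm v = 1\<close> cross \<open>\<rho> > 0\<close> by blast
  qed
  then have "inward_normal g B p = v" unfolding inward_normal_def by simp
  with \<open>norm v = 1\<close> show ?thesis by simp
qed

end

section \<open>Sides of the barriers\<close>

lemma pos_side_diff: "closed B \<Longrightarrow> pos_side B - B = inside B"
  unfolding pos_side_def
  using frontier_inside_subset[of B] closure_Un_frontier[of "inside B"] closure_subset[of "inside B"]
    inside_no_overlap[of B] by blast

lemma neg_side_diff: "closed B \<Longrightarrow> neg_side B - B = outside B"
  unfolding neg_side_def
  using frontier_outside_subset[of B] closure_Un_frontier[of "outside B"] closure_subset[of "outside B"]
    outside_no_overlap[of B] by blast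

lemma connected_off_curve_one_side:
  fixes B :: "complex set"
  assumes "closed B" "connected S" "S \<inter> B = {}" "y \<in> S"
  shows "y \<in> neg_side B \<Longrightarrow> S \<inter> pos_side B = {}" and "y \<in> pos_side B \<Longrightarrow> S \<inter> neg_side B = {}"
proof -
  have "y \<notin> B" using assms(3,4) by blast
  have "outside B \<inter> pos_side B = {}" "inside B \<inter> neg_side B = {}"
    unfolding pos_side_def neg_side_def using assms(1)
    by (simp_all add: open_Int_closure_eq_empty open_inside open_outside inf_commute)
  then show "y \<in> neg_side B \<Longrightarrow> S \<inter> pos_side B = {}" "y \<in> pos_side B \<Longrightarrow> S \<inter> neg_side B = {}"
    using connected_disjoint_subset_component[OF assms(2-4)] pos_side_diff[OF assms(1)]
      neg_side_diff[OF assms(1)] \<open>y \<notin> B\<close> by blast+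
qed

lemma closed_segment_crosses_curve:
  fixes B :: "complex set"
  assumes "closed B" "(x \<in> pos_side B \<and> y \<in> neg_side B) \<or> (x \<in> neg_side B \<and> y \<in> pos_side B)"
  shows "closed_segment x y \<inter> B \<noteq> {}"
proof
  assume "closed_segment x y \<inter> B = {}"
  from connected_off_curve_one_side[OF assms(1) connected_segment this, of y] assms(2)
  show False by auto
qed

lemma connected_Int_disjoint_closed_Un:
  assumes "closed P" "closed Q" "P \<inter> Q = {}" "connected (S \<inter> (P \<union> Q))" "S \<inter> P \<noteq> {}"
  shows "S \<inter> Q = {}"
  using assms unfolding connected_closed by blast

lemma connected_ball_Int_barriers:
  assumes "x \<in> D" "0 \<le> r" "r < rho_const D m B"
    and "bounded (\<Union>j\<le>m. B j)" "\<not> connected (\<Union>j\<le>m. B j)"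
  shows "connected (ball x r \<inter> (\<Union>j\<le>m. B j))"
proof -
  define U where "U = (\<Union>j\<le>m. B j)"
  define R where "R = {r. r \<ge> 0 \<and> (\<forall>r'\<in>{0..r}. \<forall>x\<in>D. connected (ball x r' \<inter> U))}"
  have "0 \<in> R" by (auto simp: R_def)
  obtain R0 where "R0 > 0" "U \<subseteq> ball x R0" using bounded_subset_ballD assms(4) U_def by blast
  have "bdd_above R"
  proof (rule bdd_aboveI)
    fix r' assume "r' \<in> R"
    show "r' \<le> R0"
    proof (rule ccontr)
      assume "\<not> r' \<le> R0"
      then have "connected (ball x R0 \<inter> U)" using \<open>r' \<in> R\<close> \<open>R0 > 0\<close> assms(1) by (auto simp: R_def)
      then show False using \<open>U \<subseteq> ball x R0\<close> assms(5) U_def by (simp add: Int_absorb1)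
    qed
  qed
  obtain r1 where "r1 \<in> R" "r < r1"
    using assms(3) less_cSup_iff[OF _ \<open>bdd_above R\<close>] \<open>0 \<in> R\<close> by (force simp: rho_const_def R_def U_def)
  then show ?thesis using assms(1,2) by (auto simp: R_def U_def)
qed

lemma ball_meets_only_crossed_barrier:
  assumes curves: "\<And>j. j \<le> m \<Longrightarrow> smooth_jordan (B j) (g j)"
    and disj: "\<And>j k. j \<le> m \<Longrightarrow> k \<le> m \<Longrightarrow> j \<noteq> k \<Longrightarrow> B j \<inter> B k = {}"
    and "i \<le> m" "k \<le> m" "i \<noteq> k"
    and "x \<in> D" "r < rho_const D m B" "norm (x - y) < r"
    and sides: "(x \<in> pos_side (B i) \<and> y \<in> neg_side (B i)) \<or> (x \<in> neg_side (B i) \<and> y \<in> pos_side (B i))"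
    and "j \<le> m" "j \<noteq> i"
  shows "ball x r \<inter> B j = {}"
proof -
  have barriers: "compact (B l)" "B l \<noteq> {}" if "l \<le> m" for l
  proof -
    have curve: "smooth_jordan_curve (B l) (g l)" using curves[OF that] by (rule smooth_jordan_curve.intro)
    show "compact (B l)" using smooth_jordan_curve.compact_curve[OF curve] .
    show "B l \<noteq> {}" using smooth_jordan_curve.curve_range[OF curve] by simp
  qed
  define V where "V = (\<Union>l\<in>{..m} - {i}. B l)"
  have U: "(\<Union>l\<le>m. B l) = B i \<union> V" using \<open>i \<le> m\<close> by (auto simp: V_def)
  have "closed (B i)" "closed V" using barriers(1) \<open>i \<le> m\<close> by (auto simp: V_def compact_imp_closed)
  moreover have "B i \<inter> V = {}" using disj \<open>i \<le> m\<close> by (auto simp: V_def)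
  moreover have "B k \<subseteq> V" using \<open>k \<le> m\<close> \<open>i \<noteq> k\<close> by (auto simp: V_def)
  ultimately have "\<not> connected (\<Union>l\<le>m. B l)"
    using connected_Int_disjoint_closed_Un[of "B i" V UNIV] barriers(2) \<open>i \<le> m\<close> \<open>k \<le> m\<close> U by auto
  moreover have "bounded (\<Union>l\<le>m. B l)" using barriers(1) by (auto intro: compact_imp_bounded)
  moreover have "0 \<le> r" using \<open>norm (x - y) < r\<close> by (meson norm_ge_zero le_less_trans less_imp_le)
  ultimately have "connected (ball x r \<inter> (B i \<union> V))"
    using connected_ball_Int_barriers[OF \<open>x \<in> D\<close> _ \<open>r < rho_const D m B\<close>] U by metis
  obtain z where z: "z \<in> closed_segment x y" "z \<in> B i"
    using closed_segment_crosses_curve[OF \<open>closed (B i)\<close> sides] by blast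
  then have "dist x z \<le> dist x y" using dist_in_closed_segment[of z x y] by (simp add: dist_commute)
  then have "z \<in> ball x r \<inter> B i" using z(2) \<open>norm (x - y) < r\<close> by (simp add: dist_norm)
  then have "ball x r \<inter> V = {}"
    using connected_Int_disjoint_closed_Un[OF \<open>closed (B i)\<close> \<open>closed V\<close> \<open>B i \<inter> V = {}\<close>
        \<open>connected (ball x r \<inter> (B i \<union> V))\<close>] by blast
  then show ?thesis using assms(10,11) by (auto simp: V_def)
qed

lemma r_delta_lt_rho_const:
  assumes "0 < \<delta>" "\<delta> < 1" "0 < r_delta \<delta> D m B g lp lm"
  shows "r_delta \<delta> D m B g lp lm < rho_const D m B"
proof -
  define \<mu> where "\<mu> = min (min (1 / kappa_max m g) (1 / lambda_max m lp lm)) (rho_const D m B)"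
  have r: "r_delta \<delta> D m B g lp lm = \<delta> * \<mu>" by (simp add: r_delta_def \<mu>_def)
  then have "0 < \<mu>" using assms(1,3) by (simp add: zero_less_mult_iff)
  moreover have "\<mu> \<le> rho_const D m B" by (simp add: \<mu>_def)
  ultimately have "\<delta> * \<mu> \<le> \<delta> * rho_const D m B" "\<delta> * rho_const D m B < rho_const D m B"
    using assms(1,2) by simp_all
  then show ?thesis using r by linarith
qed

lemma D_delta_ball_Int_barrier:
  assumes "x \<in> D_delta \<delta> D m B g lp lm" "j \<le> m"
  shows "ball x (r_delta \<delta> D m B g lp lm / 5) \<inter> B j = {}"
  using assms by (force simp: D_delta_def)

section \<open>The first switch of a two-state chain\<close>

lemma cadlag_sign_path_right_constant:
  assumes "cadlag f" "\<forall>t\<ge>0. f t = 1 \<or> f t = -1" "0 \<le> e"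
  obtains b where "e < b" "\<And>t. e < t \<Longrightarrow> t < b \<Longrightarrow> f t = f e"
proof -
  have "(f \<longlongrightarrow> f e) (at_right e)"
    using assms(1,3) unfolding cadlag_def by (simp add: continuous_within)
  then have "eventually (\<lambda>t. dist (f t) (f e) < 1) (at_right e)"
    by (rule tendstoD) simp
  then obtain b where b: "e < b" "\<And>t. e < t \<Longrightarrow> t < b \<Longrightarrow> dist (f t) (f e) < 1"
    unfolding eventually_at_right_field by blast
  have "f t = f e" if "e < t" "t < b" for t
  proof -
    have "f t = 1 \<or> f t = -1" "f e = 1 \<or> f e = -1" using assms(2) that \<open>0 \<le> e\<close> by simp_all
    then show ?thesis using b(2)[OF that] by (auto simp: dist_real_def)
  qed
  with b(1) show thesis by (rule that)
qed

lemma E1_nonneg: "0 \<le> E1 f"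
  unfolding E1_def by (rule Inf_greatest) auto

lemma first_switch_time:
  assumes "cadlag f" "\<forall>t\<ge>0. f t = 1 \<or> f t = -1" "E1 f < ereal c"
  obtains e where "E1 f = ereal e" "0 \<le> e" "f e \<noteq> f 0"
proof -
  define S where "S = {t. 0 \<le> t \<and> f t \<noteq> f 0}"
  have E: "E1 f = Inf (ereal ` S)" by (simp add: E1_def S_def)
  from E1_nonneg[of f] assms(3) obtain e where e: "E1 f = ereal e" "0 \<le> e" by (cases "E1 f") auto
  have before: "f t = f 0" if "0 \<le> t" "t < e" for t
  proof (rule ccontr)
    assume "f t \<noteq> f 0"
    then have "E1 f \<le> ereal t" unfolding E using that by (intro INF_lower) (simp add: S_def)
    with e(1) \<open>t < e\<close> show False by simp
  qed
  have "f e \<noteq> f 0"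
  proof
    assume "f e = f 0"
    obtain b where "e < b" and after: "\<And>t. e < t \<Longrightarrow> t < b \<Longrightarrow> f t = f e"
      using cadlag_sign_path_right_constant[OF assms(1,2) e(2)] by blast
    have "ereal b \<le> E1 f" unfolding E
    proof (rule Inf_greatest)
      fix x assume "x \<in> ereal ` S"
      then obtain t where t: "x = ereal t" "0 \<le> t" "f t \<noteq> f 0" by (auto simp: S_def)
      have "b \<le> t"
      proof (rule ccontr)
        assume "\<not> b \<le> t"
        then have "f t = f 0"
          using before[OF t(2)] after[of t] \<open>f e = f 0\<close> by (cases t e rule: linorder_cases) auto
        with t(3) show False ..
      qed
      with t(1) show "ereal b \<le> x" by simp
    qed
    with e(1) \<open>e < b\<close> show False by simp
  qed
  with e show thesis by (rule that)
qed

lemma local_time_below_E1: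
  fixes L f :: "real \<Rightarrow> real"
  assumes "cadlag f" "\<forall>t\<ge>0. f t = 1 \<or> f t = -1" "E1 f < ereal c"
    and "continuous_on {0..T} L" "L 0 = 0"
    and no_switch: "\<And>t. t \<in> {0..T} \<Longrightarrow> f (L t) = f 0" and "t \<in> {0..T}"
  shows "L t < c"
proof -
  obtain e where e: "E1 f = ereal e" "0 \<le> e" "f e \<noteq> f 0"
    using first_switch_time[OF assms(1-3)] by blast
  have "L t < e"
  proof (rule ccontr)
    assume "\<not> L t < e"
    then obtain t' where "t' \<in> {0..t}" "L t' = e"
      using IVT'[of L 0 e t] e(2) assms(5,7) continuous_on_subset[OF assms(4), of "{0..t}"] by auto
    then show False using no_switch[of t'] e(3) assms(7) by simp
  qed
  with e(1) assms(3) show ?thesis by simp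
qed

section \<open>Snapping-out paths\<close>

lemma norm_set_integral_le_measure:
  fixes F :: "real \<Rightarrow> 'a::{banach, second_countable_topology}"
  assumes "set_integrable M A F" "space M = UNIV"
    and "\<And>r. r \<in> A \<Longrightarrow> norm (F r) = indicator C r"
  shows "norm (LINT r:A|M. F r) \<le> measure M (A \<inter> C)"
proof -
  have "norm (LINT r:A|M. F r) \<le> (LINT r:A|M. norm (F r))"
    by (rule set_integral_norm_bound[OF assms(1)])
  also have "(LINT r:A|M. norm (F r)) = integral\<^sup>L M (indicator (A \<inter> C))"
    unfolding set_lebesgue_integral_def
  proof (rule Bochner_Integration.integral_cong)
    show "indicator A r *\<^sub>R norm (F r) = indicator (A \<inter> C) r" for r
      using assms(3)[of r] by (cases "r \<in> A") (simp_all add: indicator_def)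
  qed simp
  also have "\<dots> = measure M (A \<inter> C)" using assms(2) by simp
  finally show ?thesis .
qed

lemma continuous_path_confined_to_ball:
  fixes X :: "real \<Rightarrow> 'a::metric_space"
  assumes X: "continuous_on {0..T} X" and "X 0 \<in> ball x r" "c < r"
    and bound: "\<And>t. t \<in> {0..T} \<Longrightarrow> X ` {0..t} \<subseteq> ball x r \<Longrightarrow> dist x (X t) \<le> c"
  shows "X ` {0..T} \<subseteq> ball x r"
proof (rule ccontr)
  define K where "K = {0..T} \<inter> X -` (- ball x r)"
  assume "\<not> X ` {0..T} \<subseteq> ball x r"
  then have "K \<noteq> {}" by (auto simp: K_def)
  moreover have "closed K" unfolding K_def using X by (intro continuous_closed_preimage) auto
  moreover have "bdd_below K" by (auto simp: K_def intro: bdd_belowI[of _ 0])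
  ultimately have "Inf K \<in> K" using closed_contains_Inf by blast
  define t1 where "t1 = Inf K"
  have "t1 \<in> {0..T}" "X t1 \<notin> ball x r" using \<open>Inf K \<in> K\<close> by (auto simp: K_def t1_def)
  have before: "X ` {0..u} \<subseteq> ball x r" if "u < t1" for u
  proof (intro image_subsetI)
    fix v assume v: "v \<in> {0..u}"
    show "X v \<in> ball x r"
    proof (rule ccontr)
      assume "X v \<notin> ball x r"
      then have "v \<in> K" using v that \<open>t1 \<in> {0..T}\<close> by (auto simp: K_def)
      then have "t1 \<le> v" unfolding t1_def using \<open>bdd_below K\<close> by (rule cInf_lower)
      then show False using v that by simp
    qed
  qed
  have "0 < t1" using \<open>X 0 \<in> ball x r\<close> \<open>X t1 \<notin> ball x r\<close> \<open>t1 \<in> {0..T}\<close> by (metis atLeastAtMost_iff order_le_less)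
  define Z where "Z = {0..t1} \<inter> X -` cball x c"
  have "closed Z"
    unfolding Z_def using X \<open>t1 \<in> {0..T}\<close> by (intro continuous_closed_preimage continuous_on_subset[OF X]) auto
  moreover have "{0..<t1} \<subseteq> Z" using bound before \<open>t1 \<in> {0..T}\<close> by (auto simp: Z_def)
  ultimately have "closure {0..<t1} \<subseteq> Z" by (rule closure_minimal[rotated])
  then have "t1 \<in> Z" using \<open>0 < t1\<close> by auto
  then show False using \<open>X t1 \<notin> ball x r\<close> \<open>c < r\<close> by (simp add: Z_def)
qed

lemma norm_le_if_close_to_scaled:
  fixes w v :: "'a::real_normed_vector"
  assumes "norm (w - u *\<^sub>R v) \<le> a" "0 \<le> u" "u \<le> 1"
  shows "norm w \<le> a + norm v"
proof -
  have "norm (u *\<^sub>R v) \<le> norm v" using assms(2,3) by (simp add: mult_left_le_one_le)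
  then show ?thesis using norm_triangle_sub[of w "u *\<^sub>R v"] assms(1) by linarith
qed

lemma snapping_out_path_displacement:
  assumes SO: "snapping_out_path D m B g s W x0 X L" and "i \<le> m" "0 \<le> t"
    and avoid: "\<And>j u. j \<le> m \<Longrightarrow> j \<noteq> i \<Longrightarrow> u \<in> {0..t} \<Longrightarrow> X u \<notin> B j"
    and unit: "\<And>z. z \<in> B i \<Longrightarrow> norm (inward_normal (g i) (B i) z) = 1"
    and sign: "\<And>u. u \<in> {0..t} \<Longrightarrow> \<bar>s i (L i u)\<bar> = 1"
  shows "norm (X t - x0 - W t) \<le> L i t"
proof -
  define F where "F j r = (s j (L j r) * indicator (B j) (X r)) *\<^sub>R inward_normal (g j) (B j) (X r)"
    for j r
  define I where "I j = (LINT r:{0..t}|LS (L j). F j r)" for j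
  note SO = SO[unfolded snapping_out_path_def, folded F_def]
  have "I j = 0" if "j \<in> {..m} - {i}" for j
  proof -
    have "(\<lambda>r. indicator {0..t} r *\<^sub>R F j r) = (\<lambda>r. 0)"
      using avoid[of j] that by (auto simp: F_def indicator_def)
    then show ?thesis by (simp add: I_def set_lebesgue_integral_def)
  qed
  then have "X t - x0 - W t = I i"
    using SO \<open>0 \<le> t\<close> \<open>i \<le> m\<close> sum.remove[of "{..m}" i I] by (simp add: I_def)
  also have "norm (I i) \<le> measure (LS (L i)) ({0..t} \<inter> {r. X r \<in> B i})"
    unfolding I_def
  proof (rule norm_set_integral_le_measure)
    show "set_integrable (LS (L i)) {0..t} (F i)" using SO \<open>0 \<le> t\<close> \<open>i \<le> m\<close> by blast
    show "space (LS (L i)) = UNIV" by (simp add: LS_def)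
    show "norm (F i r) = indicator {r. X r \<in> B i} r" if "r \<in> {0..t}" for r
      using sign[OF that] unit[of "X r"] by (simp add: F_def indicator_def)
  qed
  also have "\<dots> = L i t"
    using SO \<open>0 \<le> t\<close> \<open>i \<le> m\<close> by (simp add: Int_def conj_commute)
  finally show ?thesis .
qed

lemma snapping_out_path_confined:
  assumes SO: "snapping_out_path D m B g s W x0 X L" and "i \<le> m" "0 \<le> T"
    and isolated: "\<And>j. j \<le> m \<Longrightarrow> j \<noteq> i \<Longrightarrow> ball x0 r \<inter> B j = {}"
    and unit: "\<And>z. z \<in> B i \<Longrightarrow> norm (inward_normal (g i) (B i) z) = 1"
    and sign: "\<And>u. u \<in> {0..T} \<Longrightarrow> \<bar>s i (L i u)\<bar> = 1"
    and small: "\<And>t. t \<in> {0..T} \<Longrightarrow> norm (W t) + L i t \<le> c" and "c < r"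
  shows "X ` {0..T} \<subseteq> ball x0 r" "norm (X T - x0 - W T) \<le> L i T"
proof -
  have displacement: "norm (X t - x0 - W t) \<le> L i t"
    if t: "t \<in> {0..T}" "X ` {0..t} \<subseteq> ball x0 r" for t
  proof (rule snapping_out_path_displacement[OF SO \<open>i \<le> m\<close> _ _ unit])
    show "X u \<notin> B j" if "j \<le> m" "j \<noteq> i" "u \<in> {0..t}" for j u
      using isolated[OF that(1,2)] t(2) that(3) by blast
    show "\<bar>s i (L i u)\<bar> = 1" if "u \<in> {0..t}" for u
      using sign that t(1) by force
  qed (use t in simp)
  have "X ` {0..T} \<subseteq> ball x0 r"
  proof (rule continuous_path_confined_to_ball)
    have "continuous_on {0..} X" using SO by (simp add: snapping_out_path_def)
    then show "continuous_on {0..T} X" by (rule continuous_on_subset) auto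
    have "L i 0 = 0" using SO \<open>i \<le> m\<close> unfolding snapping_out_path_def by blast
    then have "norm (W 0) \<le> c" using small[of 0] \<open>0 \<le> T\<close> by simp
    then have "0 \<le> c" using norm_ge_zero order_trans by blast
    then show "X 0 \<in> ball x0 r" using SO \<open>c < r\<close> by (simp add: snapping_out_path_def)
    show "dist x0 (X t) \<le> c" if "t \<in> {0..T}" "X ` {0..t} \<subseteq> ball x0 r" for t
      using displacement[OF that] small[OF that(1)] norm_triangle_ineq[of "W t" "X t - x0 - W t"]
      by (simp add: dist_norm norm_minus_commute)
  qed fact
  then show "X ` {0..T} \<subseteq> ball x0 r" "norm (X T - x0 - W T) \<le> L i T"
    using displacement \<open>0 \<le> T\<close> by auto
qed

lemma snapping_out_path_avoids_opposite_ball: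
  assumes SO: "snapping_out_path D m B g s W x0 X L" and "j \<le> m" "0 \<le> T"
    and sinit: "s j 0 = (if x0 \<in> pos_side (B j) then 1 else -1)"
    and "s j (L j T) = s j 0" "closed (B j)" "0 < \<epsilon>"
    and "ball x0 \<epsilon> \<inter> B j = {}" "ball y \<epsilon> \<inter> B j = {}"
    and sides: "(x0 \<in> pos_side (B j) \<and> y \<in> neg_side (B j)) \<or> (x0 \<in> neg_side (B j) \<and> y \<in> pos_side (B j))"
  shows "X T \<notin> ball y \<epsilon>"
proof -
  have side: "(s j (L j T) = 1 \<longrightarrow> X T \<in> pos_side (B j)) \<and> (s j (L j T) = -1 \<longrightarrow> X T \<in> neg_side (B j))"
    using SO \<open>j \<le> m\<close> \<open>0 \<le> T\<close> unfolding snapping_out_path_def by blast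
  have "x0 \<in> ball x0 \<epsilon>" using \<open>0 < \<epsilon>\<close> by simp
  then have "x0 \<notin> B j" using \<open>ball x0 \<epsilon> \<inter> B j = {}\<close> by blast
  then have "x0 \<in> neg_side (B j) \<Longrightarrow> x0 \<notin> pos_side (B j)"
    using pos_side_diff[OF \<open>closed (B j)\<close>] neg_side_diff[OF \<open>closed (B j)\<close>] inside_Int_outside by blast
  then have "(x0 \<in> pos_side (B j) \<longrightarrow> X T \<in> pos_side (B j)) \<and> (x0 \<in> neg_side (B j) \<longrightarrow> X T \<in> neg_side (B j))"
    using side sinit \<open>s j (L j T) = s j 0\<close> by auto
  moreover have "y \<in> ball y \<epsilon>" using \<open>0 < \<epsilon>\<close> by simp
  note connected_off_curve_one_side[OF \<open>closed (B j)\<close> connected_ball \<open>ball y \<epsilon> \<inter> B j = {}\<close> this]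
  ultimately show ?thesis using sides by blast
qed

lemma snapping_out_path_ends_near_target:
  assumes SO: "snapping_out_path D m B g s W x0 X L" and "i \<le> m" "0 < T" "0 < r"
    and isolated: "\<And>j. j \<le> m \<Longrightarrow> j \<noteq> i \<Longrightarrow> ball x0 r \<inter> B j = {}"
    and unit: "\<And>z. z \<in> B i \<Longrightarrow> norm (inward_normal (g i) (B i) z) = 1"
    and sign: "\<And>u. u \<in> {0..T} \<Longrightarrow> \<bar>s i (L i u)\<bar> = 1"
    and L_small: "\<And>t. t \<in> {0..T} \<Longrightarrow> L i t < \<alpha> * r"
    and W_close: "\<forall>t\<in>{0..T}. norm (W t - (t / T) *\<^sub>R (y - x0)) \<le> \<gamma> * r"
    and "norm (x0 - y) \<le> 4/5 * r" "\<alpha> < 1/5 - \<gamma>"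
  shows "X T \<in> ball y (r / 5)"
proof -
  have "(\<alpha> + \<gamma>) * r < 1/5 * r" using \<open>\<alpha> < 1/5 - \<gamma>\<close> \<open>0 < r\<close> by (intro mult_strict_right_mono) auto
  then have bound: "(\<gamma> + 4/5 + \<alpha>) * r < r" unfolding distrib_right by linarith
  have small: "norm (W t) + L i t \<le> (\<gamma> + 4/5 + \<alpha>) * r" if "t \<in> {0..T}" for t
  proof -
    have "norm (W t) \<le> \<gamma> * r + norm (y - x0)"
      using norm_le_if_close_to_scaled[OF W_close[rule_format, OF that]] that \<open>0 < T\<close> by simp
    then show ?thesis
      using L_small[OF that] \<open>norm (x0 - y) \<le> 4/5 * r\<close> unfolding distrib_right by (simp add: norm_minus_commute)
  qed
  have "T \<in> {0..T}" using \<open>0 < T\<close> by simp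
  have "norm (X T - x0 - W T) \<le> L i T"
    using snapping_out_path_confined[OF SO \<open>i \<le> m\<close> less_imp_le[OF \<open>0 < T\<close>] isolated unit sign small bound]
    by blast
  moreover have "norm (x0 + W T - y) \<le> \<gamma> * r"
    using W_close[rule_format, OF \<open>T \<in> {0..T}\<close>] \<open>0 < T\<close> by (simp add: algebra_simps)
  ultimately have "norm (X T - y) \<le> L i T + \<gamma> * r"
    by (intro norm_diff_triangle_le[of _ "x0 + W T"]) (simp_all add: diff_diff_eq)
  then have "norm (X T - y) < r / 5"
    using L_small[OF \<open>T \<in> {0..T}\<close>] \<open>(\<alpha> + \<gamma>) * r < 1/5 * r\<close> unfolding distrib_right by linarith
  then show ?thesis by (simp add: dist_norm norm_minus_commute)
qed

theorem mainTheorem5: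
  fixes D D0 :: "complex set" and m i :: nat and B :: "nat \<Rightarrow> complex set"
    and g :: "nat \<Rightarrow> nat \<Rightarrow> real \<Rightarrow> complex"
    and lp lm :: "nat \<Rightarrow> real" and s :: "nat \<Rightarrow> real \<Rightarrow> real"
    and W X :: "real \<Rightarrow> complex" and L :: "nat \<Rightarrow> real \<Rightarrow> real"
    and x0 y :: complex and \<alpha> \<beta> \<gamma> \<delta> :: real
  defines "r \<equiv> r_delta \<delta> D m B g lp lm"
  assumes D0: "open D0" "bounded D0" "D = closure D0" "connected D" "simply_connected D"
    and B0: "frontier D = B 0"
    and curves: "\<And>j. j \<le> m \<Longrightarrow> smooth_jordan (B j) (g j)"
    and inD0: "\<And>j. 1 \<le> j \<Longrightarrow> j \<le> m \<Longrightarrow> B j \<subseteq> D0"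
    and disj: "\<And>j k. j \<le> m \<Longrightarrow> k \<le> m \<Longrightarrow> j \<noteq> k \<Longrightarrow> B j \<inter> B k = {}"
    and rates: "\<And>j. 1 \<le> j \<Longrightarrow> j \<le> m \<Longrightarrow> lp j > 0 \<and> lm j > 0"
    and chains: "\<And>j. 1 \<le> j \<Longrightarrow> j \<le> m \<Longrightarrow> cadlag (s j) \<and> (\<forall>t\<ge>0. s j t = 1 \<or> s j t = -1)"
    and s0: "s 0 = (\<lambda>_. 1)"
    and sinit: "\<And>j. 1 \<le> j \<Longrightarrow> j \<le> m \<Longrightarrow> s j 0 = (if x0 \<in> pos_side (B j) then 1 else -1)"
    and W: "continuous_on {0..} W" "W 0 = 0"
    and SOBM: "snapping_out_path D m B g s W x0 X L"
    and params: "\<alpha> > 0" "\<beta> > 0" "\<gamma> > 0" "\<alpha> < 1/5 - \<gamma>" "0 < \<delta>" "\<delta> < 1/2"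
    and i: "1 \<le> i" "i \<le> m"
    and pts: "x0 \<in> D_delta \<delta> D m B g lp lm" "y \<in> D_delta \<delta> D m B g lp lm"
      "norm (x0 - y) \<le> 4/5 * r"
    and sides: "(x0 \<in> pos_side (B i) \<and> y \<in> neg_side (B i)) \<or> (x0 \<in> neg_side (B i) \<and> y \<in> pos_side (B i))"
    and A: "E1 (s i) < ereal (\<alpha> * r)" "E2 (s i) > ereal (\<beta> * r)"
      "\<forall>t\<in>{0..r^2}. norm (W t - (t / r^2) *\<^sub>R (y - x0)) \<le> \<gamma> * r"
  shows "\<exists>t\<in>{0..r^2}. s i (L i t) \<noteq> s i 0"
proof (rule ccontr)
  assume "\<not> (\<exists>t\<in>{0..r^2}. s i (L i t) \<noteq> s i 0)"
  then have no_switch: "\<And>t. t \<in> {0..r^2} \<Longrightarrow> s i (L i t) = s i 0" by blast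
  have curve: "smooth_jordan_curve (B i) (g i)" using curves[OF i(2)] by (rule smooth_jordan_curve.intro)
  have "0 < ereal (\<alpha> * r)" using le_less_trans[OF E1_nonneg A(1)] .
  then have "0 < r" using params(1) by (simp add: zero_less_mult_iff)
  have L_small: "L i t < \<alpha> * r" if "t \<in> {0..r^2}" for t
  proof (rule local_time_below_E1[OF _ _ A(1) _ _ no_switch that])
    show "cadlag (s i)" "\<forall>t\<ge>0. s i t = 1 \<or> s i t = -1" using chains[OF i] by auto
    have "continuous_on {0..} (L i)" "L i 0 = 0" using SOBM i(2) unfolding snapping_out_path_def by blast+
    then show "continuous_on {0..r^2} (L i)" "L i 0 = 0" by (auto elim: continuous_on_subset)
  qed
  have isolated: "ball x0 r \<inter> B j = {}" if "j \<le> m" "j \<noteq> i" for j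
  proof (rule ball_meets_only_crossed_barrier[where B = B and g = g and k = 0,
        OF curves disj i(2) _ _ _ _ _ sides that])
    show "x0 \<in> D" using pts(1) by (simp add: D_delta_def)
    show "r < rho_const D m B" using r_delta_lt_rho_const params(5,6) \<open>0 < r\<close> by (simp add: r_def)
    show "norm (x0 - y) < r" using pts(3) \<open>0 < r\<close> by simp
  qed (use i in auto)
  have "X (r^2) \<in> ball y (r / 5)"
  proof (rule snapping_out_path_ends_near_target[OF SOBM i(2) _ \<open>0 < r\<close> isolated _ _ L_small
        A(3) pts(3) params(4)])
    show "norm (inward_normal (g i) (B i) z) = 1" if "z \<in> B i" for z
      using smooth_jordan_curve.norm_inward_normal[OF curve that] .
    show "\<bar>s i (L i u)\<bar> = 1" if "u \<in> {0..r^2}" for u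
      using no_switch[OF that] sinit[OF i] by simp
  qed (use \<open>0 < r\<close> in simp)
  moreover have "X (r^2) \<notin> ball y (r / 5)"
  proof (rule snapping_out_path_avoids_opposite_ball[OF SOBM i(2) _ sinit[OF i] no_switch _ _ _ _ sides])
    show "closed (B i)" using smooth_jordan_curve.closed_curve[OF curve] .
    show "ball x0 (r / 5) \<inter> B i = {}" "ball y (r / 5) \<inter> B i = {}"
      using D_delta_ball_Int_barrier[OF pts(1) i(2)] D_delta_ball_Int_barrier[OF pts(2) i(2)]
      by (simp_all add: r_def)
  qed (use \<open>0 < r\<close> in simp_all)
  ultimately show False by contradiction
qed

end
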